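(* For $n\geq 2$, the Shilov boundary of $\mathbb L_n$ is $\partial_s\mathbb L_n=\Lambda_n(\partial_s L_n)$, where $\partial_s L_n$ is the Shilov boundary of the Lie ball $L_n$.
   Context: $L_n:=\{z\in\mathbb C^n:\|z\|<1,\ \sqrt{\|z\|^4-|\sum_jz_j^2|^2}<1-\|z\|^2\}$ with $\|z\|^2=\sum_j|z_j|^2$; $\Lambda_n(z)=(z_1^2,z_2,\dots,z_n)$ and $\mathbb L_n:=\Lambda_n(L_n)$. The Shilov boundary $\partial_s D$ of a bounded domain $D$ is the Shilov boundary of the algebra of functions continuous on $\overline D$ and holomorphic in $D$. *)

theory Defs
  imports "HOL-Analysis.Analysis"
begin

text \<open>Points of C^n, n = 1 + CARD('m) (so n >= 2), are written z = (z_1, w)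
  with z_1 :: complex and w = (z_2,...,z_n) :: complex^'m.
  The norm on the product type is the Euclidean norm
  sqrt(|z_1|^2 + sum_j |z_j|^2).\<close>

type_synonym 'm cvec = "complex \<times> (complex ^ 'm)"

definition cscale :: "complex \<Rightarrow> 'm::finite cvec \<Rightarrow> 'm cvec" where
  "cscale c z = (c * fst z, \<chi> j. c * (snd z $ j))"

definition holo_on :: "('m::finite cvec \<Rightarrow> complex) \<Rightarrow> 'm cvec set \<Rightarrow> bool" where
  "holo_on f U \<longleftrightarrow> (\<forall>z\<in>U. \<exists>f'. (f has_derivative f') (at z) \<and>
                          (\<forall>c v. f' (cscale c v) = c * f' v))"

definition alg_A :: "'m::finite cvec set \<Rightarrow> ('m cvec \<Rightarrow> complex) set" where
  "alg_A D = {f. continuous_on (closure D) f \<and> holo_on f D}"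

definition is_closed_boundary :: "'m::finite cvec set \<Rightarrow> 'm cvec set \<Rightarrow> bool" where
  "is_closed_boundary D S \<longleftrightarrow> closed S \<and> S \<subseteq> closure D \<and>
     (\<forall>f\<in>alg_A D. \<forall>z\<in>closure D. \<exists>s\<in>S. norm (f z) \<le> norm (f s))"

definition shilov_boundary :: "'m::finite cvec set \<Rightarrow> 'm cvec set" where
  "shilov_boundary D = \<Inter> {S. is_closed_boundary D S}"

definition sqsum :: "'m::finite cvec \<Rightarrow> complex" where
  "sqsum z = (fst z)^2 + (\<Sum>j\<in>UNIV. (snd z $ j)^2)"

definition lie_ball :: "'m::finite cvec set" where
  "lie_ball = {z. norm z < 1 \<and>
      sqrt (norm z ^ 4 - (cmod (sqsum z))^2) < 1 - (norm z)^2}"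

definition Lam :: "'m::finite cvec \<Rightarrow> 'm cvec" where
  "Lam z = ((fst z)^2, snd z)"

definition LL :: "'m::finite cvec set" where
  "LL = Lam ` lie_ball"

end

theory Submission
  imports Defs "HOL-Complex_Analysis.Complex_Analysis"
begin

no_notation fps_nth (infixl \<open>$\<close> 75)

text \<open>The Shilov boundary of the Lie ball is the Lie sphere, where norm z = 1 and
  |sqsum z| = 1. It is a boundary by the maximum principle on analytic discs. A point of the
  cone |sqsum z| = |z|^2 is t s with s on the Lie sphere and |t| < 1, and the disc
  t \<mapsto> t s has its boundary circle in the Lie sphere. Any other point of the Lie ball
  is, after a unimodular rotation, x + i y with x, y real, orthogonal and |x| \<ge> |y| > 0;
  it is the value at |x| - |y| of a disc of radius |x| + |y| < 1 whose boundary circle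
  lies in the cone. The Lie sphere lies in every boundary because exp(z . conj p) peaks
  exactly at p.

  Composing with Lambda, which maps the closure of L onto the closure of Lambda(L),
  transports the boundary property to Lambda(L). Conversely, on the Lie sphere
  p_1^2 = sqsum p |p_1|^2, so the modulus of
  exp(conj(sqsum p) v_1 + 2 (v_2, ..., v_n) . conj(p_2, ..., p_n)) attains its maximum over
  the closure of Lambda(L) only at v = Lambda(p).\<close>

text \<open>Indexing the coordinates of C^n by 'm option, with None for the first one, turns
  the product representation into a single finite sum.\<close>

definition coord :: "'m::finite cvec \<Rightarrow> 'm option \<Rightarrow> complex" where
  "coord z k = (case k of None \<Rightarrow> fst z | Some j \<Rightarrow> snd z $ j)"

definition of_coords :: "('m option \<Rightarrow> complex) \<Rightarrow> 'm::finite cvec" where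
  "of_coords g = (g None, \<chi> j. g (Some j))"

lemma coord_None [simp]: "coord z None = fst z"
  and coord_Some [simp]: "coord z (Some j) = snd z $ j"
  by (simp_all add: coord_def)

lemma coord_of_coords [simp]: "coord (of_coords g) k = g k"
  by (cases k) (simp_all add: of_coords_def)

lemma sum_UNIV_option:
  "(\<Sum>k\<in>(UNIV::'m::finite option set). g k) = g None + (\<Sum>j\<in>UNIV. g (Some j))"
  by (simp add: UNIV_option_conv sum.reindex)

lemma cvec_eq_iff: "z = w \<longleftrightarrow> (\<forall>k. coord z k = coord w k)"
proof
  assume "\<forall>k. coord z k = coord w k"
  then have "fst z = fst w" "\<And>j. snd z $ j = snd w $ j"
    by (metis coord_None, metis coord_Some)
  then show "z = w" by (simp add: prod_eq_iff vec_eq_iff)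
qed simp

lemma coord_add [simp]: "coord (z + w) k = coord z k + coord w k"
  and coord_zero [simp]: "coord 0 k = 0"
  and coord_scaleR [simp]: "coord (r *\<^sub>R z) k = r *\<^sub>R coord z k"
  and coord_cscale [simp]: "coord (cscale c z) k = c * coord z k"
  by (cases k; simp add: cscale_def)+

lemma power2_norm_cvec: "(norm z)^2 = (cmod (fst z))^2 + (norm (snd z))^2"
  by (metis norm_Pair prod.collapse real_sqrt_pow2 add_nonneg_nonneg zero_le_power2)

lemma power2_norm_eq_sum_coord: "(norm z)^2 = (\<Sum>k\<in>UNIV. (cmod (coord z k))^2)"
proof -
  have "(norm (snd z))^2 = (\<Sum>j\<in>UNIV. (cmod (snd z $ j))^2)"
    by (simp add: norm_vec_def L2_set_def sum_nonneg)
  then show ?thesis by (simp add: power2_norm_cvec sum_UNIV_option)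
qed

lemma sqsum_eq_sum_coord: "sqsum z = (\<Sum>k\<in>UNIV. (coord z k)^2)"
  by (simp add: sqsum_def sum_UNIV_option)

lemma norm_cscale: "norm (cscale c z) = cmod c * norm z"
proof -
  have "(norm (cscale c z))^2 = (cmod c * norm z)^2"
    by (simp add: power2_norm_eq_sum_coord power_mult_distrib norm_mult sum_distrib_left)
  then show ?thesis using power2_eq_iff_nonneg by force
qed

lemma sqsum_cscale: "sqsum (cscale c z) = c^2 * sqsum z"
  by (simp add: sqsum_eq_sum_coord power_mult_distrib sum_distrib_left)

lemma bounded_linear_cscale_left: "bounded_linear (\<lambda>c. cscale c (V::'m::finite cvec))"
proof (rule bounded_linear_intro[where K="norm V"])
  show "cscale (x + y) V = cscale x V + cscale y V" for x y
    by (simp add: cvec_eq_iff distrib_right)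
  show "cscale (r *\<^sub>R x) V = r *\<^sub>R cscale x V" for r x
    by (simp add: cvec_eq_iff scaleR_conv_of_real)
  show "norm (cscale x V) \<le> norm x * norm V" for x
    by (simp add: norm_cscale)
qed

definition cinner :: "'m::finite cvec \<Rightarrow> 'm cvec \<Rightarrow> complex" where
  "cinner z p = fst z * cnj (fst p) + (\<Sum>j\<in>UNIV. snd z $ j * cnj (snd p $ j))"

lemma cinner_eq_sum_coord: "cinner z p = (\<Sum>k\<in>UNIV. coord z k * cnj (coord p k))"
  by (simp add: cinner_def sum_UNIV_option)

lemma Re_cinner: "Re (cinner z p) = ((norm z)^2 + (norm p)^2 - (norm (z - p))^2) / 2"
proof -
  have "Re (cinner z p) = inner z p"
    by (simp add: cinner_def inner_prod_def inner_vec_def inner_complex_def)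
  then show ?thesis by (simp add: dot_norm_neg)
qed

section \<open>Holomorphic functions of several variables\<close>

lemma holomorphic_on_complex_line:
  assumes holo: "holo_on f U" and "open T"
    and line: "\<And>\<zeta>. \<zeta> \<in> T \<Longrightarrow> A + cscale \<zeta> V \<in> U"
  shows "(\<lambda>\<zeta>. f (A + cscale \<zeta> V)) holomorphic_on T"
  unfolding holomorphic_on_def
proof
  fix \<zeta> assume "\<zeta> \<in> T"
  obtain f' where df: "(f has_derivative f') (at (A + cscale \<zeta> V))"
    and f'_hom: "\<forall>c v. f' (cscale c v) = c * f' v"
    using holo line[OF \<open>\<zeta> \<in> T\<close>] unfolding holo_on_def by blast
  have "((\<lambda>\<zeta>. A + cscale \<zeta> V) has_derivative (\<lambda>h. cscale h V)) (at \<zeta>)"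
    using bounded_linear.has_derivative[OF bounded_linear_cscale_left[of V] has_derivative_ident]
    by (auto intro!: derivative_eq_intros)
  from diff_chain_at[OF this df]
  have "((\<lambda>\<zeta>. f (A + cscale \<zeta> V)) has_derivative (\<lambda>h. f' (cscale h V))) (at \<zeta>)"
    by (simp add: o_def)
  moreover have "(\<lambda>h. f' (cscale h V)) = (*) (f' V)"
    using f'_hom by (intro ext) (metis mult.commute)
  ultimately show "(\<lambda>\<zeta>. f (A + cscale \<zeta> V)) field_differentiable at \<zeta> within T"
    unfolding field_differentiable_def has_field_derivative_def
    by (metis has_derivative_at_withinI)
qed

lemma exp_complex_linear_in_alg_A:
  assumes L: "bounded_linear L" and L_hom: "\<And>c v. L (cscale c v) = c * L v"
  shows "(\<lambda>z. exp (L z)) \<in> alg_A D"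
  unfolding alg_A_def holo_on_def
proof (intro CollectI conjI ballI)
  show "continuous_on (closure D) (\<lambda>z. exp (L z))"
    by (intro continuous_intros linear_continuous_on L)
  fix z
  have "((\<lambda>z. exp (L z)) has_derivative (\<lambda>h. exp (L z) * L h)) (at z)"
    using has_derivative_compose[OF bounded_linear.has_derivative[OF L has_derivative_ident]
       DERIV_exp[unfolded has_field_derivative_def]] by fast
  then show "\<exists>f'. ((\<lambda>z. exp (L z)) has_derivative f') (at z) \<and> (\<forall>c v. f' (cscale c v) = c * f' v)"
    by (intro exI[of _ "\<lambda>h. exp (L z) * L h"]) (simp add: L_hom)
qed

lemma holo_on_compose_Lam:
  assumes holo: "holo_on f V" and "Lam ` U \<subseteq> V"
  shows "holo_on (\<lambda>z. f (Lam z)) U"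
  unfolding holo_on_def
proof
  fix z assume "z \<in> U"
  obtain f' where df: "(f has_derivative f') (at (Lam z))"
    and f'_hom: "\<forall>c v. f' (cscale c v) = c * f' v"
    using holo assms(2) \<open>z \<in> U\<close> unfolding holo_on_def by blast
  have "(Lam has_derivative (\<lambda>h. (2 * fst z * fst h, snd h))) (at z)"
    unfolding Lam_def
    by (auto intro!: derivative_eq_intros has_derivative_Pair
        bounded_linear.has_derivative[OF bounded_linear_fst]
        bounded_linear.has_derivative[OF bounded_linear_snd])
  from diff_chain_at[OF this df]
  have "((\<lambda>z. f (Lam z)) has_derivative (\<lambda>h. f' (2 * fst z * fst h, snd h))) (at z)"
    by (simp add: o_def)
  moreover have "f' (2 * fst z * fst (cscale c h), snd (cscale c h)) = c * f' (2 * fst z * fst h, snd h)"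
    for c h
  proof -
    have "(2 * fst z * fst (cscale c h), snd (cscale c h)) = cscale c (2 * fst z * fst h, snd h)"
      by (simp add: cscale_def)
    then show ?thesis using f'_hom by simp
  qed
  ultimately show "\<exists>f'. ((\<lambda>z. f (Lam z)) has_derivative f') (at z) \<and> (\<forall>c v. f' (cscale c v) = c * f' v)"
    by blast
qed

lemma complex_line_cball_subset_closure:
  assumes "0 < r" and line: "\<And>\<zeta>. cmod \<zeta> < r \<Longrightarrow> A + cscale \<zeta> V \<in> D"
  shows "(\<lambda>\<zeta>. A + cscale \<zeta> V) ` cball 0 r \<subseteq> closure D"
proof -
  have "continuous_on (closure (ball 0 r)) (\<lambda>\<zeta>. A + cscale \<zeta> V)"
    by (intro continuous_intros linear_continuous_on bounded_linear_cscale_left)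
  moreover have "(\<lambda>\<zeta>. A + cscale \<zeta> V) ` ball 0 r \<subseteq> closure D"
    using line closure_subset by fastforce
  ultimately show ?thesis
    using image_closure_subset[OF _ closed_closure] \<open>0 < r\<close> by (metis closure_ball)
qed

lemma maximum_modulus_complex_line:
  assumes cont: "continuous_on (closure D) f" and holo: "holo_on f D" and "0 < r"
    and line: "\<And>\<zeta>. cmod \<zeta> < r \<Longrightarrow> A + cscale \<zeta> V \<in> D"
    and circle: "\<And>\<zeta>. cmod \<zeta> = r \<Longrightarrow> cmod (f (A + cscale \<zeta> V)) \<le> M"
    and "cmod t \<le> r"
  shows "cmod (f (A + cscale t V)) \<le> M"
proof (rule maximum_modulus_frontier[of "\<lambda>\<zeta>. f (A + cscale \<zeta> V)" "cball 0 r" M t])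
  show "(\<lambda>\<zeta>. f (A + cscale \<zeta> V)) holomorphic_on interior (cball 0 r)"
    unfolding interior_cball using line by (intro holomorphic_on_complex_line[OF holo open_ball]) simp
  have "continuous_on (cball 0 r) (\<lambda>\<zeta>. A + cscale \<zeta> V)"
    by (intro continuous_intros linear_continuous_on bounded_linear_cscale_left)
  then show "continuous_on (closure (cball 0 r)) (\<lambda>\<zeta>. f (A + cscale \<zeta> V))"
    using continuous_on_compose2[OF cont _ complex_line_cball_subset_closure[OF \<open>0 < r\<close> line]]
    by simp
qed (use circle \<open>cmod t \<le> r\<close> in auto)

lemma shilov_boundary_eqI:
  assumes "is_closed_boundary D S" and "\<And>T. is_closed_boundary D T \<Longrightarrow> S \<subseteq> T"
  shows "shilov_boundary D = S"
  using assms unfolding shilov_boundary_def by blast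

lemma peak_point_in_closed_boundary:
  assumes T: "is_closed_boundary D T" and "f \<in> alg_A D" and "p \<in> closure D"
    and peak: "\<And>z. z \<in> closure D \<Longrightarrow> norm (f p) \<le> norm (f z) \<Longrightarrow> z = p"
  shows "p \<in> T"
proof -
  obtain s where "s \<in> T" and "norm (f p) \<le> norm (f s)"
    using T assms(2,3) unfolding is_closed_boundary_def by blast
  moreover have "s \<in> closure D" using T \<open>s \<in> T\<close> unfolding is_closed_boundary_def by blast
  ultimately show ?thesis using peak by blast
qed

lemma is_closed_boundary_image:
  assumes S: "is_closed_boundary D S" and "closed (\<Phi> ` S)"
    and closure_E: "closure E = \<Phi> ` closure D"
    and compose: "\<And>f. f \<in> alg_A E \<Longrightarrow> f \<circ> \<Phi> \<in> alg_A D"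
  shows "is_closed_boundary E (\<Phi> ` S)"
  unfolding is_closed_boundary_def
proof (intro conjI ballI)
  show "\<Phi> ` S \<subseteq> closure E"
    using S closure_E unfolding is_closed_boundary_def by blast
  fix f v assume "f \<in> alg_A E" and "v \<in> closure E"
  then obtain z where "z \<in> closure D" "v = \<Phi> z" using closure_E by blast
  moreover from S compose[OF \<open>f \<in> alg_A E\<close>] \<open>z \<in> closure D\<close>
  obtain s where "s \<in> S" "norm ((f \<circ> \<Phi>) z) \<le> norm ((f \<circ> \<Phi>) s)"
    unfolding is_closed_boundary_def by blast
  ultimately show "\<exists>s\<in>\<Phi> ` S. norm (f v) \<le> norm (f s)" by auto
qed (use assms(2) in simp)

definition lie_sphere :: "'m::finite cvec set" where
  "lie_sphere = {z. norm z = 1 \<and> cmod (sqsum z) = 1}"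

lemma lie_ball_subset_cball: "lie_ball \<subseteq> cball 0 1"
  by (auto simp: lie_ball_def)

lemma bounded_lie_ball: "bounded lie_ball"
  using lie_ball_subset_cball bounded_cball bounded_subset by blast

lemma norm_le_1_if_in_closure_lie_ball: "z \<in> closure lie_ball \<Longrightarrow> norm z \<le> 1"
  using closure_minimal[OF lie_ball_subset_cball closed_cball] by auto

lemma cscale_lie_sphere_in_lie_ball:
  assumes "s \<in> lie_sphere" and "cmod t < 1"
  shows "cscale t s \<in> lie_ball"
proof -
  have "norm (cscale t s) = cmod t" and "cmod (sqsum (cscale t s)) = (cmod t)^2"
    using assms by (simp_all add: lie_sphere_def norm_cscale sqsum_cscale norm_mult norm_power)
  moreover have "(cmod t)^4 - ((cmod t)^2)^2 = 0" by (simp flip: power_mult)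
  moreover have "(cmod t)^2 < 1" using assms(2) by (simp add: abs_square_less_1)
  ultimately show ?thesis using assms(2) unfolding lie_ball_def by simp
qed

lemma cscale_lie_sphere_in_lie_sphere:
  "s \<in> lie_sphere \<Longrightarrow> cmod t = 1 \<Longrightarrow> cscale t s \<in> lie_sphere"
  by (simp add: lie_sphere_def norm_cscale sqsum_cscale norm_mult norm_power)

lemma lie_sphere_subset_closure_lie_ball: "lie_sphere \<subseteq> closure lie_ball"
proof
  fix s :: "'m::finite cvec" assume "s \<in> lie_sphere"
  have "(\<lambda>\<zeta>. 0 + cscale \<zeta> s) ` cball 0 1 \<subseteq> closure lie_ball"
    using cscale_lie_sphere_in_lie_ball[OF \<open>s \<in> lie_sphere\<close>]
    by (intro complex_line_cball_subset_closure) simp_all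
  moreover have "s = 0 + cscale 1 s" by (simp add: cvec_eq_iff)
  ultimately show "s \<in> closure lie_ball" by (metis image_subset_iff mem_cball_0 norm_one order_refl)
qed

lemma compact_lie_sphere: "compact lie_sphere"
proof -
  have "closed (lie_sphere :: 'm::finite cvec set)"
    unfolding lie_sphere_def sqsum_def Collect_conj_eq
    by (intro closed_Int closed_Collect_eq continuous_intros)
  moreover have "lie_sphere \<subseteq> cball 0 1" by (auto simp: lie_sphere_def)
  ultimately show ?thesis by (meson bounded_cball bounded_subset compact_eq_bounded_closed)
qed

lemma one_in_lie_sphere: "((1::complex), 0::complex^'m::finite) \<in> lie_sphere"
  by (simp add: lie_sphere_def norm_Pair sqsum_def)

lemma lie_ball_cone_point:
  assumes "p \<in> lie_ball" and "cmod (sqsum p) = (norm p)^2"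
  obtains s t where "s \<in> lie_sphere" "cmod t < 1" "p = cscale t s"
proof (cases "p = 0")
  case True
  then have "p = cscale 0 (1, 0)" by (simp add: cvec_eq_iff)
  then show ?thesis by (intro that[OF one_in_lie_sphere]) simp_all
next
  case False
  define s where "s = cscale (of_real (1 / norm p)) p"
  have "s \<in> lie_sphere"
    using False assms(2)
    by (simp add: lie_sphere_def s_def norm_cscale sqsum_cscale norm_mult norm_power norm_divide
        power_divide)
  moreover have "p = cscale (of_real (norm p)) s"
    using False by (simp add: s_def cvec_eq_iff)
  moreover have "cmod (of_real (norm p)) < 1"
    using assms(1) by (simp add: lie_ball_def)
  ultimately show ?thesis using that by blast
qed

lemma exists_unimodular_square_mult_eq_norm: "\<exists>l. cmod l = 1 \<and> l^2 * s = of_real (cmod s)"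
proof (cases "s = 0")
  case True then show ?thesis by (intro exI[of _ 1]) simp
next
  case False
  define l where "l = csqrt (cnj s / of_real (cmod s))"
  have l2: "l^2 = cnj s / of_real (cmod s)" by (simp add: l_def)
  have "(cmod l)^2 = 1^2" using False by (simp add: l2 norm_divide flip: norm_power)
  then have "cmod l = 1" using power2_eq_iff_nonneg[of "cmod l" 1] by simp
  moreover have "l^2 * s = of_real (cmod s)"
  proof -
    have "l^2 * s = (s * cnj s) / of_real (cmod s)" by (simp add: l2 field_simps)
    also have "\<dots> = of_real ((cmod s)^2) / of_real (cmod s)" by (metis complex_norm_square)
    also have "\<dots> = of_real (cmod s)" using False by (simp add: power2_eq_square)
    finally show ?thesis .
  qed
  ultimately show ?thesis by blast
qed

lemma rotation_to_orthogonal_real_imag: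
  obtains l :: complex and x y :: "'m::finite option \<Rightarrow> real"
  where "cmod l = 1" "z = cscale l (of_coords (\<lambda>k. of_real (x k) + \<i> * of_real (y k)))"
    "(\<Sum>k\<in>UNIV. x k * y k) = 0"
    "(norm z)^2 = (\<Sum>k\<in>UNIV. (x k)^2) + (\<Sum>k\<in>UNIV. (y k)^2)"
    "cmod (sqsum z) = (\<Sum>k\<in>UNIV. (x k)^2) - (\<Sum>k\<in>UNIV. (y k)^2)"
proof -
  obtain l where l: "cmod l = 1" and l_sqsum: "l^2 * sqsum z = of_real (cmod (sqsum z))"
    using exists_unimodular_square_mult_eq_norm by blast
  define z' where "z' = cscale l z"
  define x where "x k = Re (coord z' k)" for k
  define y where "y k = Im (coord z' k)" for k
  have sqsum_z': "sqsum z' = of_real (cmod (sqsum z))"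
    by (simp add: z'_def sqsum_cscale l_sqsum)
  have "Re (sqsum z') = (\<Sum>k\<in>UNIV. (x k)^2) - (\<Sum>k\<in>UNIV. (y k)^2)"
    by (simp add: sqsum_eq_sum_coord Re_power2 x_def y_def sum_subtractf)
  moreover have "Im (sqsum z') = 2 * (\<Sum>k\<in>UNIV. x k * y k)"
    by (simp add: sqsum_eq_sum_coord Im_power2 x_def y_def sum_distrib_left mult.assoc)
  moreover have "(norm z)^2 = (\<Sum>k\<in>UNIV. (x k)^2) + (\<Sum>k\<in>UNIV. (y k)^2)"
    using power2_norm_eq_sum_coord[of z']
    by (simp add: z'_def norm_cscale l cmod_power2 x_def y_def sum.distrib)
  moreover have "z = cscale (cnj l) (of_coords (\<lambda>k. of_real (x k) + \<i> * of_real (y k)))"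
  proof -
    have "cnj l * l = 1"
      using l complex_norm_square[of l] by (simp add: mult.commute)
    then have "z = cscale (cnj l) z'"
      by (simp add: cvec_eq_iff z'_def mult.assoc[symmetric])
    moreover have "z' = of_coords (\<lambda>k. of_real (x k) + \<i> * of_real (y k))"
      by (simp add: cvec_eq_iff x_def y_def flip: complex_eq)
    ultimately show ?thesis by simp
  qed
  ultimately show ?thesis using that[of "cnj l"] l sqsum_z' by simp
qed

section \<open>Analytic discs in the Lie ball\<close>

text \<open>The disc is built so that lie_disc mu (a + b) X Y takes the value
  mu (a X + i b Y) at a - b.\<close>

definition lie_disc ::
    "complex \<Rightarrow> real \<Rightarrow> ('m option \<Rightarrow> real) \<Rightarrow> ('m option \<Rightarrow> real) \<Rightarrow> complex \<Rightarrow> 'm::finite cvec"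
  where "lie_disc \<mu> q X Y \<zeta> = of_coords (\<lambda>k. \<mu> * ((\<zeta> + of_real q) / 2 * of_real (X k)
                                              + (\<zeta> - of_real q) / (2 * \<i>) * of_real (Y k)))"

lemma lie_disc_affine:
  "lie_disc \<mu> q X Y \<zeta> =
     lie_disc \<mu> q X Y 0 + cscale \<zeta> (of_coords (\<lambda>k. \<mu> * (of_real (X k) / 2 + of_real (Y k) / (2 * \<i>))))"
  by (simp add: lie_disc_def cvec_eq_iff diff_divide_distrib add_divide_distrib algebra_simps)

context
  fixes X Y :: "'m::finite option \<Rightarrow> real" and \<mu> :: complex
  assumes X: "(\<Sum>k\<in>UNIV. (X k)^2) = 1" and Y: "(\<Sum>k\<in>UNIV. (Y k)^2) = 1"
    and XY: "(\<Sum>k\<in>UNIV. X k * Y k) = 0" and \<mu>: "cmod \<mu> = 1"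
begin

lemma power2_norm_orthonormal_comb:
  fixes \<alpha> \<beta> :: complex
  shows "(norm (of_coords (\<lambda>k. \<mu> * (\<alpha> * X k + \<beta> * Y k)) :: 'm cvec))^2 = (cmod \<alpha>)^2 + (cmod \<beta>)^2"
proof -
  have "(cmod (\<alpha> * X k + \<beta> * Y k))^2
      = (cmod \<alpha>)^2 * (X k)^2 + (cmod \<beta>)^2 * (Y k)^2 + 2 * (Re \<alpha> * Re \<beta> + Im \<alpha> * Im \<beta>) * (X k * Y k)"
    for k
    unfolding cmod_power2 by (simp add: power2_eq_square algebra_simps)
  then have "(\<Sum>k\<in>UNIV. (cmod (\<alpha> * X k + \<beta> * Y k))^2)
      = (cmod \<alpha>)^2 * (\<Sum>k\<in>UNIV. (X k)^2) + (cmod \<beta>)^2 * (\<Sum>k\<in>UNIV. (Y k)^2)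
        + 2 * (Re \<alpha> * Re \<beta> + Im \<alpha> * Im \<beta>) * (\<Sum>k\<in>UNIV. X k * Y k)"
    by (simp add: sum.distrib sum_distrib_left)
  then show ?thesis
    using X Y XY by (simp add: power2_norm_eq_sum_coord norm_mult \<mu>)
qed

lemma sqsum_orthonormal_comb:
  fixes \<alpha> \<beta> :: complex
  shows "sqsum (of_coords (\<lambda>k. \<mu> * (\<alpha> * X k + \<beta> * Y k)) :: 'm cvec) = \<mu>^2 * (\<alpha>^2 + \<beta>^2)"
proof -
  have "sqsum (of_coords (\<lambda>k. \<mu> * (\<alpha> * X k + \<beta> * Y k)) :: 'm cvec)
     = \<mu>^2 * (\<alpha>^2 * of_real (\<Sum>k\<in>UNIV. (X k)^2) + \<beta>^2 * of_real (\<Sum>k\<in>UNIV. (Y k)^2)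
         + 2 * \<alpha> * \<beta> * of_real (\<Sum>k\<in>UNIV. X k * Y k))"
    by (simp add: sqsum_eq_sum_coord power2_eq_square algebra_simps sum.distrib sum_distrib_left)
  then show ?thesis using X Y XY by simp
qed

lemma power2_norm_lie_disc: "(norm (lie_disc \<mu> q X Y \<zeta>))^2 = ((cmod \<zeta>)^2 + q^2) / 2"
proof -
  have "(norm (lie_disc \<mu> q X Y \<zeta>))^2
      = (cmod ((\<zeta> + of_real q) / 2))^2 + (cmod ((\<zeta> - of_real q) / (2 * \<i>)))^2"
    unfolding lie_disc_def by (rule power2_norm_orthonormal_comb)
  also have "\<dots> = ((cmod (\<zeta> + of_real q))^2 + (cmod (\<zeta> - of_real q))^2) / 4"
    by (simp add: norm_divide norm_mult power_divide)
  also have "(cmod (\<zeta> + of_real q))^2 + (cmod (\<zeta> - of_real q))^2 = 2 * (cmod \<zeta>)^2 + 2 * q^2"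
    unfolding cmod_power2 by (simp add: power2_eq_square algebra_simps)
  finally show ?thesis by simp
qed

lemma norm_sqsum_lie_disc:
  assumes "0 \<le> q" shows "cmod (sqsum (lie_disc \<mu> q X Y \<zeta>)) = cmod \<zeta> * q"
proof -
  have "sqsum (lie_disc \<mu> q X Y \<zeta>) = \<mu>^2 * (((\<zeta> + of_real q) / 2)^2 + ((\<zeta> - of_real q) / (2 * \<i>))^2)"
    unfolding lie_disc_def by (rule sqsum_orthonormal_comb)
  also have "\<dots> = \<mu>^2 * (\<zeta> * of_real q)"
    by (simp add: power2_eq_square field_simps)
  finally show ?thesis using assms by (simp add: norm_mult norm_power \<mu>)
qed

lemma lie_disc_in_lie_ball:
  assumes "cmod \<zeta> < 1" and "0 \<le> q" and "q < 1"
  shows "lie_disc \<mu> q X Y \<zeta> \<in> lie_ball"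
proof -
  define u where "u = (cmod \<zeta>)^2"
  define v where "v = q^2"
  have "u < 1" "v < 1" "0 \<le> u" "0 \<le> v"
    using assms by (auto simp: u_def v_def abs_square_less_1)
  have n: "(norm (lie_disc \<mu> q X Y \<zeta>))^2 = (u + v) / 2"
    using power2_norm_lie_disc by (simp add: u_def v_def)
  then have "(norm (lie_disc \<mu> q X Y \<zeta>))^2 < 1"
    using \<open>u < 1\<close> \<open>v < 1\<close> by simp
  then have "norm (lie_disc \<mu> q X Y \<zeta>) < 1" by (simp add: abs_square_less_1)
  have "(norm (lie_disc \<mu> q X Y \<zeta>))^4 = ((u + v) / 2)^2"
    by (simp flip: n power_mult)
  moreover have "(cmod (sqsum (lie_disc \<mu> q X Y \<zeta>)))^2 = u * v"
    using assms by (simp add: norm_sqsum_lie_disc u_def v_def power_mult_distrib)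
  moreover have "((u + v) / 2)^2 - u * v = ((u - v) / 2)^2"
    by (simp add: power2_eq_square field_simps)
  ultimately have "sqrt ((norm (lie_disc \<mu> q X Y \<zeta>))^4 - (cmod (sqsum (lie_disc \<mu> q X Y \<zeta>)))^2)
      = \<bar>u - v\<bar> / 2"
    by simp
  also have "\<dots> < 1 - (norm (lie_disc \<mu> q X Y \<zeta>))^2"
    using n \<open>u < 1\<close> \<open>v < 1\<close> by (simp add: abs_if)
  finally show ?thesis
    using \<open>norm (lie_disc \<mu> q X Y \<zeta>) < 1\<close> by (simp add: lie_ball_def)
qed

lemma lie_disc_circle_in_cone:
  assumes "cmod \<zeta> = q"
  shows "cmod (sqsum (lie_disc \<mu> q X Y \<zeta>)) = (norm (lie_disc \<mu> q X Y \<zeta>))^2"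
  using assms norm_sqsum_lie_disc[of q \<zeta>] power2_norm_lie_disc[of q \<zeta>] norm_ge_zero[of \<zeta>]
  by (simp add: power2_eq_square)

end

lemma add_lt_1_if_in_lie_ball:
  assumes "z \<in> lie_ball" and "0 \<le> a" and "0 \<le> b"
    and "(norm z)^2 = a^2 + b^2" and "cmod (sqsum z) = a^2 - b^2"
  shows "a + b < 1"
proof -
  have "(norm z)^4 = ((norm z)^2)^2" by (simp flip: power_mult)
  then have "(norm z)^4 - (cmod (sqsum z))^2 = (a^2 + b^2)^2 - (a^2 - b^2)^2"
    by (simp add: assms(4,5))
  also have "\<dots> = (2 * a * b)^2" by (simp add: power2_eq_square algebra_simps)
  finally have "2 * a * b < 1 - (a^2 + b^2)"
    using assms(1-4) by (simp add: lie_ball_def)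
  then have "(a + b)^2 < 1" by (simp add: power2_eq_square algebra_simps)
  then show ?thesis using assms(2,3) by (simp add: abs_square_less_1)
qed

lemma lie_ball_point_on_lie_disc:
  fixes z :: "'m::finite cvec"
  assumes "z \<in> lie_ball" and "cmod (sqsum z) \<noteq> (norm z)^2"
  obtains \<mu> q X Y t
  where "(\<Sum>k\<in>UNIV. (X k)^2) = 1" "(\<Sum>k\<in>UNIV. (Y k)^2) = 1" "(\<Sum>k\<in>UNIV. X k * Y k) = 0"
    "cmod \<mu> = 1" "0 < q" "q < 1" "cmod t < q" "z = lie_disc \<mu> q X Y t"
proof -
  obtain \<mu> and x y :: "'m option \<Rightarrow> real"
    where \<mu>: "cmod \<mu> = 1" and z: "z = cscale \<mu> (of_coords (\<lambda>k. of_real (x k) + \<i> * of_real (y k)))"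
      and xy: "(\<Sum>k\<in>UNIV. x k * y k) = 0"
      and norm_z: "(norm z)^2 = (\<Sum>k\<in>UNIV. (x k)^2) + (\<Sum>k\<in>UNIV. (y k)^2)"
      and sqsum_z: "cmod (sqsum z) = (\<Sum>k\<in>UNIV. (x k)^2) - (\<Sum>k\<in>UNIV. (y k)^2)"
    by (rule rotation_to_orthogonal_real_imag)
  define a where "a = sqrt (\<Sum>k\<in>UNIV. (x k)^2)"
  define b where "b = sqrt (\<Sum>k\<in>UNIV. (y k)^2)"
  have "0 < b" using assms(2) norm_z sqsum_z by (simp add: b_def sum_nonneg order_le_neq_trans)
  moreover have "b \<le> a" using sqsum_z norm_ge_zero[of "sqsum z"] by (simp add: a_def b_def)
  ultimately have "0 < a" by simp
  have a2: "a^2 = (\<Sum>k\<in>UNIV. (x k)^2)" and b2: "b^2 = (\<Sum>k\<in>UNIV. (y k)^2)"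
    by (simp_all add: a_def b_def sum_nonneg)
  have "a + b < 1"
    using add_lt_1_if_in_lie_ball[OF \<open>z \<in> lie_ball\<close>, of a b] \<open>0 < a\<close> \<open>0 < b\<close> norm_z sqsum_z
    by (simp add: a2 b2)
  define X where "X k = x k / a" for k
  define Y where "Y k = y k / b" for k
  have "(\<Sum>k\<in>UNIV. (X k)^2) = 1" "(\<Sum>k\<in>UNIV. (Y k)^2) = 1" "(\<Sum>k\<in>UNIV. X k * Y k) = 0"
    using \<open>0 < a\<close> \<open>0 < b\<close> xy
    by (simp_all add: X_def Y_def power_divide flip: sum_divide_distrib a2 b2)
  moreover have "z = lie_disc \<mu> (a + b) X Y (of_real (a - b))"
    using \<open>0 < a\<close> \<open>0 < b\<close>
    by (simp add: z lie_disc_def cvec_eq_iff X_def Y_def field_simps)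
  moreover have "cmod (of_real (a - b)) < a + b"
    unfolding norm_of_real using \<open>0 < a\<close> \<open>0 < b\<close> by simp
  moreover have "0 < a + b" using \<open>0 < a\<close> \<open>0 < b\<close> by simp
  ultimately show ?thesis using that \<mu> \<open>a + b < 1\<close> by blast
qed

section \<open>The Shilov boundary of the Lie ball\<close>

context
  fixes f :: "'m::finite cvec \<Rightarrow> complex" and M :: real
  assumes f_cont: "continuous_on (closure lie_ball) f" and f_holo: "holo_on f lie_ball"
    and f_bound: "\<And>s. s \<in> lie_sphere \<Longrightarrow> cmod (f s) \<le> M"
begin

lemma lie_sphere_bound_on_cone:
  assumes "p \<in> lie_ball" and "cmod (sqsum p) = (norm p)^2"
  shows "cmod (f p) \<le> M"
proof -
  obtain s t where s: "s \<in> lie_sphere" and "cmod t < 1" and p: "p = 0 + cscale t s"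
    using lie_ball_cone_point[OF assms] by (metis add_0)
  show ?thesis unfolding p
  proof (rule maximum_modulus_complex_line[OF f_cont f_holo zero_less_one])
    show "0 + cscale \<zeta> s \<in> lie_ball" if "cmod \<zeta> < 1" for \<zeta>
      using cscale_lie_sphere_in_lie_ball[OF s that] by simp
    show "cmod (f (0 + cscale \<zeta> s)) \<le> M" if "cmod \<zeta> = 1" for \<zeta>
      using f_bound cscale_lie_sphere_in_lie_sphere[OF s that] by simp
  qed (use \<open>cmod t < 1\<close> in simp)
qed

lemma lie_sphere_bound_on_lie_ball:
  assumes "z \<in> lie_ball"
  shows "cmod (f z) \<le> M"
proof (cases "cmod (sqsum z) = (norm z)^2")
  case True
  then show ?thesis using lie_sphere_bound_on_cone[OF assms] by simp
next
  case False
  obtain \<mu> q X Y t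
    where XY: "(\<Sum>k\<in>UNIV. (X k)^2) = 1" "(\<Sum>k\<in>UNIV. (Y k)^2) = 1" "(\<Sum>k\<in>UNIV. X k * Y k) = 0"
      "cmod \<mu> = 1" and q: "0 < q" "q < 1" and "cmod t < q" and z: "z = lie_disc \<mu> q X Y t"
    by (rule lie_ball_point_on_lie_disc[OF assms False])
  define V where "V = of_coords (\<lambda>k. \<mu> * (of_real (X k) / 2 + of_real (Y k) / (2 * \<i>)))"
  have disc: "lie_disc \<mu> q X Y \<zeta> = lie_disc \<mu> q X Y 0 + cscale \<zeta> V" for \<zeta>
    unfolding V_def by (rule lie_disc_affine)
  have "cmod (f (lie_disc \<mu> q X Y 0 + cscale t V)) \<le> M"
  proof (rule maximum_modulus_complex_line[OF f_cont f_holo \<open>0 < q\<close>])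
    show "lie_disc \<mu> q X Y 0 + cscale \<zeta> V \<in> lie_ball" if "cmod \<zeta> < q" for \<zeta>
      unfolding disc[symmetric] using that q by (intro lie_disc_in_lie_ball[OF XY]) auto
    show "cmod (f (lie_disc \<mu> q X Y 0 + cscale \<zeta> V)) \<le> M" if "cmod \<zeta> = q" for \<zeta>
      unfolding disc[symmetric] using that q
      by (intro lie_sphere_bound_on_cone lie_disc_in_lie_ball[OF XY] lie_disc_circle_in_cone[OF XY]) auto
  qed (use \<open>cmod t < q\<close> in simp)
  then show ?thesis by (simp only: z disc[symmetric])
qed

end

lemma lie_sphere_is_closed_boundary: "is_closed_boundary (lie_ball :: 'm::finite cvec set) lie_sphere"
  unfolding is_closed_boundary_def
proof (intro conjI ballI)
  show "closed lie_sphere" using compact_lie_sphere compact_imp_closed by blast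
  show "lie_sphere \<subseteq> closure lie_ball" by (rule lie_sphere_subset_closure_lie_ball)
  fix f :: "'m cvec \<Rightarrow> complex" and z :: "'m cvec" assume "f \<in> alg_A lie_ball" and "z \<in> closure lie_ball"
  then have f_cont: "continuous_on (closure lie_ball) f" and f_holo: "holo_on f lie_ball"
    by (auto simp: alg_A_def)
  have "continuous_on lie_sphere (\<lambda>s. cmod (f s))"
    by (intro continuous_on_norm continuous_on_subset[OF f_cont lie_sphere_subset_closure_lie_ball])
  then obtain s0 where "s0 \<in> lie_sphere" and s0_max: "\<And>s. s \<in> lie_sphere \<Longrightarrow> cmod (f s) \<le> cmod (f s0)"
    using continuous_attains_sup[OF compact_lie_sphere] one_in_lie_sphere by blast
  have "f ` lie_ball \<subseteq> cball 0 (cmod (f s0))"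
    using lie_sphere_bound_on_lie_ball[OF f_cont f_holo s0_max] by auto
  then have "f ` closure lie_ball \<subseteq> cball 0 (cmod (f s0))"
    by (rule image_closure_subset[OF f_cont closed_cball])
  then have "cmod (f z) \<le> cmod (f s0)"
    using \<open>z \<in> closure lie_ball\<close> by auto
  then show "\<exists>s\<in>lie_sphere. cmod (f z) \<le> cmod (f s)"
    using \<open>s0 \<in> lie_sphere\<close> by blast
qed

lemma lie_sphere_subset_closed_boundary:
  fixes T :: "'m::finite cvec set"
  assumes T: "is_closed_boundary lie_ball T"
  shows "lie_sphere \<subseteq> T"
proof
  fix p :: "'m cvec" assume p: "p \<in> lie_sphere"
  have "bounded_linear (\<lambda>z. cinner z p)"
    unfolding cinner_def
    by (intro bounded_linear_add bounded_linear_sum bounded_linear_compose[OF bounded_linear_mult_left]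
        bounded_linear_fst bounded_linear_compose[OF bounded_linear_vec_nth bounded_linear_snd])
  then have peak_fun: "(\<lambda>z. exp (cinner z p)) \<in> alg_A lie_ball"
    by (rule exp_complex_linear_in_alg_A) (simp add: cinner_def cscale_def sum_distrib_left algebra_simps)
  show "p \<in> T"
  proof (rule peak_point_in_closed_boundary[OF T peak_fun])
    show "p \<in> closure lie_ball" using p lie_sphere_subset_closure_lie_ball by blast
    fix z assume "z \<in> closure lie_ball" and "cmod (exp (cinner p p)) \<le> cmod (exp (cinner z p))"
    then have "2 \<le> (norm z)^2 + 1 - (norm (z - p))^2" and "(norm z)^2 \<le> 1"
      using p norm_le_1_if_in_closure_lie_ball[of z]
      by (simp_all add: Re_cinner lie_sphere_def abs_square_le_1)
    then have "(norm (z - p))^2 \<le> 0" by linarith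
    then show "z = p" by simp
  qed
qed

lemma shilov_boundary_lie_ball: "shilov_boundary lie_ball = lie_sphere"
  by (intro shilov_boundary_eqI lie_sphere_is_closed_boundary lie_sphere_subset_closed_boundary)

section \<open>The Shilov boundary of the image of the Lie ball\<close>

lemma closure_continuous_image_of_bounded:
  fixes D :: "'a::heine_borel set" and \<Phi> :: "'a \<Rightarrow> 'b::t2_space"
  assumes "bounded D" and cont: "continuous_on (closure D) \<Phi>"
  shows "closure (\<Phi> ` D) = \<Phi> ` closure D"
proof
  have "compact (\<Phi> ` closure D)"
    using assms by (intro compact_continuous_image) simp_all
  then have "closed (\<Phi> ` closure D)" by (rule compact_imp_closed)
  then show "closure (\<Phi> ` D) \<subseteq> \<Phi> ` closure D"
    by (rule closure_minimal[rotated]) (use closure_subset in blast)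
  show "\<Phi> ` closure D \<subseteq> closure (\<Phi> ` D)"
    by (rule image_closure_subset[OF cont closed_closure closure_subset])
qed

lemma continuous_on_Lam: "continuous_on S Lam"
  unfolding Lam_def by (intro continuous_intros)

lemma closure_LL: "closure LL = Lam ` closure lie_ball"
  unfolding LL_def by (intro closure_continuous_image_of_bounded bounded_lie_ball continuous_on_Lam)

lemma compose_Lam_in_alg_A:
  assumes "f \<in> alg_A LL"
  shows "f \<circ> Lam \<in> alg_A lie_ball"
proof -
  have cont: "continuous_on (closure LL) f" and holo: "holo_on f LL"
    using assms by (auto simp: alg_A_def)
  have "continuous_on (closure lie_ball) (\<lambda>z. f (Lam z))"
    by (rule continuous_on_compose2[OF cont continuous_on_Lam]) (simp add: closure_LL)
  moreover have "holo_on (\<lambda>z. f (Lam z)) lie_ball"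
    by (rule holo_on_compose_Lam[OF holo]) (simp add: LL_def)
  ultimately show ?thesis by (simp add: alg_A_def o_def)
qed

lemma Lam_lie_sphere_is_closed_boundary: "is_closed_boundary LL (Lam ` lie_sphere)"
  by (rule is_closed_boundary_image[OF lie_sphere_is_closed_boundary])
    (simp_all add: closure_LL compose_Lam_in_alg_A compact_imp_closed compact_continuous_image
      continuous_on_Lam compact_lie_sphere)

lemma lie_sphere_coord_eq:
  assumes "p \<in> lie_sphere"
  shows "coord p k = sqsum p * cnj (coord p k)"
proof -
  define c where "c = sqsum p"
  define q where "q = of_coords (\<lambda>k. c * cnj (coord p k))"
  have "cmod c = 1" and "norm p = 1" using assms by (auto simp: lie_sphere_def c_def)
  then have "c * cnj c = 1" using complex_norm_square[of c] by simp
  have "(norm q)^2 = (norm p)^2"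
    using \<open>cmod c = 1\<close> by (simp add: power2_norm_eq_sum_coord q_def norm_mult)
  then have "norm q = norm p"
    using power2_eq_iff_nonneg[of "norm q" "norm p"] by simp
  have "cinner p q = cnj c * c"
    by (simp add: cinner_eq_sum_coord q_def c_def sqsum_eq_sum_coord sum_distrib_left power2_eq_square
        mult.left_commute)
  then have "(norm (p - q))^2 = 0"
    using Re_cinner[of p q] \<open>norm q = norm p\<close> \<open>norm p = 1\<close> \<open>c * cnj c = 1\<close>
    by (simp add: mult.commute)
  then have "coord p k = coord q k" by simp
  then show ?thesis by (simp add: q_def c_def)
qed

lemma lie_sphere_fst_square:
  assumes "p \<in> lie_sphere"
  shows "(fst p)^2 = sqsum p * of_real ((cmod (fst p))^2)"
proof -
  have "fst p * fst p = sqsum p * cnj (fst p) * fst p"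
    using arg_cong[OF lie_sphere_coord_eq[OF assms, of None], of "\<lambda>x. x * fst p"] by simp
  then show ?thesis by (simp only: power2_eq_square[of "fst p"] complex_norm_square ac_simps)
qed

definition Lam_peak :: "'m::finite cvec \<Rightarrow> 'm cvec \<Rightarrow> complex" where
  "Lam_peak p v = cnj (sqsum p) * fst v + 2 * (\<Sum>j\<in>UNIV. snd v $ j * cnj (snd p $ j))"

lemma Re_Lam_peak_Lam:
  "Re (Lam_peak p (Lam z)) = Re (cnj (sqsum p) * (fst z)^2) + 2 * inner (snd z) (snd p)"
  by (simp add: Lam_peak_def Lam_def inner_vec_def inner_complex_def)

lemma of_real_cmod_if_Re_eq_cmod: "Re r = cmod r \<Longrightarrow> r = of_real (cmod r)"
  using cmod_power2[of r] by (simp add: complex_eq_iff)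

lemma Re_Lam_peak_Lam_self:
  assumes p: "p \<in> lie_sphere"
  shows "Re (Lam_peak p (Lam p)) = 1 + (norm (snd p))^2"
proof -
  have "cmod (sqsum p) = 1" and "(cmod (fst p))^2 + (norm (snd p))^2 = 1"
    using p power2_norm_cvec[of p] by (auto simp: lie_sphere_def)
  then have "cnj (sqsum p) * sqsum p = 1"
    using complex_norm_square[of "sqsum p"] by (simp add: mult.commute)
  then have "cnj (sqsum p) * (fst p)^2 = of_real ((cmod (fst p))^2)"
    unfolding lie_sphere_fst_square[OF p] by (simp add: mult.assoc[symmetric])
  then show ?thesis
    using \<open>(cmod (fst p))^2 + (norm (snd p))^2 = 1\<close>
    by (simp add: Re_Lam_peak_Lam flip: power2_norm_eq_inner)
qed

lemma Lam_peak_peaks: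
  assumes p: "p \<in> lie_sphere" and z: "z \<in> closure lie_ball"
    and le: "Re (Lam_peak p (Lam p)) \<le> Re (Lam_peak p (Lam z))"
  shows "Lam z = Lam p"
proof -
  define c where "c = sqsum p"
  define r where "r = cnj c * (fst z)^2"
  have "cmod c = 1" and "(norm p)^2 = 1" using p by (simp_all add: lie_sphere_def c_def)
  then have "cnj c * c = 1" using complex_norm_square[of c] by (simp add: mult.commute)
  have "Re (Lam_peak p (Lam z))
      = Re r + ((norm (snd z))^2 + (norm (snd p))^2 - (norm (snd z - snd p))^2)"
    by (simp add: Re_Lam_peak_Lam r_def c_def dot_norm_neg)
  moreover have "cmod r = (cmod (fst z))^2"
    by (simp add: r_def norm_mult norm_power \<open>cmod c = 1\<close>)
  moreover have Re_le: "Re r \<le> cmod r" by (rule complex_Re_le_cmod)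
  moreover have norm_z: "(cmod (fst z))^2 + (norm (snd z))^2 \<le> 1"
    using norm_le_1_if_in_closure_lie_ball[OF z] by (simp add: abs_square_le_1 flip: power2_norm_cvec)
  ultimately have "(norm (snd z - snd p))^2 \<le> 0" and "cmod r \<le> Re r"
    and "1 \<le> (cmod (fst z))^2 + (norm (snd z))^2"
    using le Re_Lam_peak_Lam_self[OF p] zero_le_power2[of "norm (snd z - snd p)"] by linarith+
  then have "snd z = snd p" and "Re r = cmod r"
    and "(cmod (fst z))^2 + (norm (snd z))^2 = 1"
    using Re_le norm_z by (simp_all add: antisym)
  then have "(cmod (fst z))^2 = (cmod (fst p))^2"
    using \<open>(norm p)^2 = 1\<close> power2_norm_cvec[of p] unfolding \<open>snd z = snd p\<close> by linarith
  have "(fst z)^2 = c * r"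
  proof -
    have "c * r = (cnj c * c) * (fst z)^2" by (simp add: r_def ac_simps)
    then show ?thesis using \<open>cnj c * c = 1\<close> by simp
  qed
  also have "\<dots> = c * of_real ((cmod (fst p))^2)"
    using of_real_cmod_if_Re_eq_cmod[OF \<open>Re r = cmod r\<close>] \<open>cmod r = (cmod (fst z))^2\<close>
      \<open>(cmod (fst z))^2 = (cmod (fst p))^2\<close>
    by simp
  also have "\<dots> = (fst p)^2" by (simp add: lie_sphere_fst_square[OF p] c_def)
  finally show ?thesis using \<open>snd z = snd p\<close> by (simp add: Lam_def)
qed

lemma Lam_lie_sphere_subset_closed_boundary:
  fixes T :: "'m::finite cvec set"
  assumes T: "is_closed_boundary LL T"
  shows "Lam ` lie_sphere \<subseteq> T"
proof
  fix v :: "'m cvec" assume "v \<in> Lam ` lie_sphere"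
  then obtain p :: "'m cvec" where p: "p \<in> lie_sphere" and v: "v = Lam p" by blast
  have "bounded_linear (Lam_peak p)"
    unfolding Lam_peak_def
    by (intro bounded_linear_add bounded_linear_mult_right bounded_linear_sum
        bounded_linear_compose[OF bounded_linear_mult_right] bounded_linear_fst
        bounded_linear_compose[OF bounded_linear_mult_left]
        bounded_linear_compose[OF bounded_linear_vec_nth bounded_linear_snd])
  then have peak_fun: "(\<lambda>v. exp (Lam_peak p v)) \<in> alg_A LL"
    by (rule exp_complex_linear_in_alg_A) (simp add: Lam_peak_def cscale_def sum_distrib_left algebra_simps)
  show "v \<in> T"
    unfolding v
  proof (rule peak_point_in_closed_boundary[OF T peak_fun])
    show "Lam p \<in> closure LL" using p lie_sphere_subset_closure_lie_ball closure_LL by blast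
    fix w assume "w \<in> closure LL" and "cmod (exp (Lam_peak p (Lam p))) \<le> cmod (exp (Lam_peak p w))"
    then show "w = Lam p"
      using Lam_peak_peaks[OF p] by (auto simp: closure_LL)
  qed
qed

lemma shilov_boundary_LL: "shilov_boundary LL = Lam ` lie_sphere"
  by (intro shilov_boundary_eqI Lam_lie_sphere_is_closed_boundary Lam_lie_sphere_subset_closed_boundary)

theorem proposition4p1:
  shows "shilov_boundary (LL :: 'm::finite cvec set) = Lam ` shilov_boundary (lie_ball :: 'm cvec set)"
  by (simp add: shilov_boundary_LL shilov_boundary_lie_ball)

end
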